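(* Let $G=(V,E)$ be a directed graph with $n=|V|$, $h>0$, and $1\le\alpha\le\log n$. For any vertices $u,v$ with $\overline{\mathrm{dist}}(u,v)\le 2h$, $$\sum_{b\in V}\min\{M_h^\alpha(u,b),M_h^\alpha(v,b)\}\ge 2^{-8\alpha}.$$
   Context: $G$ has positive integer edge lengths; $\mathrm{dist}$ is directed shortest-path distance and $\overline{\mathrm{dist}}(u,v)=\mathrm{dist}(u,v)+\mathrm{dist}(v,u)$. Exponential weights: $w_h^\alpha(u,v)=1$ if $u=v$; $=2^{-\alpha\overline{\mathrm{dist}}(u,v)/h}$ if $u\neq v$ and $\overline{\mathrm{dist}}(u,v)\le\frac{2h\log_2 n}{\alpha}$; $=0$ otherwise. $w_h^\alpha(u)=\sum_{b\in V}w_h^\alpha(u,b)$ and the mixing factor is $M_h^\alpha(u,v)=w_h^\alpha(u,v)/w_h^\alpha(u)$. *)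

theory Defs
  imports "HOL-Analysis.Analysis" "HOL-Library.Extended_Nat"
begin

definition is_path :: "('a \<times> 'a) set \<Rightarrow> 'a list \<Rightarrow> 'a \<Rightarrow> 'a \<Rightarrow> bool" where
  "is_path E xs u v \<longleftrightarrow> xs \<noteq> [] \<and> hd xs = u \<and> last xs = v \<and>
     (\<forall>i. Suc i < length xs \<longrightarrow> (xs ! i, xs ! Suc i) \<in> E)"

definition path_len :: "('a \<times> 'a \<Rightarrow> nat) \<Rightarrow> 'a list \<Rightarrow> nat" where
  "path_len len xs = (\<Sum>i<length xs - 1. len (xs ! i, xs ! Suc i))"

text \<open>Directed shortest-path distance (infinite if v is unreachable from u).\<close>
definition gdist :: "('a \<times> 'a) set \<Rightarrow> ('a \<times> 'a \<Rightarrow> nat) \<Rightarrow> 'a \<Rightarrow> 'a \<Rightarrow> enat" where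
  "gdist E len u v = (INF xs \<in> {xs. is_path E xs u v}. enat (path_len len xs))"

definition rdist :: "('a \<times> 'a) set \<Rightarrow> ('a \<times> 'a \<Rightarrow> nat) \<Rightarrow> 'a \<Rightarrow> 'a \<Rightarrow> enat" where
  "rdist E len u v = gdist E len u v + gdist E len v u"

definition wexp :: "'a set \<Rightarrow> ('a \<times> 'a) set \<Rightarrow> ('a \<times> 'a \<Rightarrow> nat) \<Rightarrow> real \<Rightarrow> real \<Rightarrow> 'a \<Rightarrow> 'a \<Rightarrow> real" where
  "wexp V E len h \<alpha> u v =
     (if u = v then 1
      else if rdist E len u v \<noteq> \<infinity> \<and>
              real (the_enat (rdist E len u v)) \<le> 2 * h * log 2 (real (card V)) / \<alpha>
           then 2 powr (- \<alpha> * real (the_enat (rdist E len u v)) / h)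
      else 0)"

definition wtot :: "'a set \<Rightarrow> ('a \<times> 'a) set \<Rightarrow> ('a \<times> 'a \<Rightarrow> nat) \<Rightarrow> real \<Rightarrow> real \<Rightarrow> 'a \<Rightarrow> real" where
  "wtot V E len h \<alpha> u = (\<Sum>b\<in>V. wexp V E len h \<alpha> u b)"

definition mixing :: "'a set \<Rightarrow> ('a \<times> 'a) set \<Rightarrow> ('a \<times> 'a \<Rightarrow> nat) \<Rightarrow> real \<Rightarrow> real \<Rightarrow> 'a \<Rightarrow> 'a \<Rightarrow> real" where
  "mixing V E len h \<alpha> u v = wexp V E len h \<alpha> u v / wtot V E len h \<alpha> u"

end

theory Submission
  imports Defs
begin

(* Write q = 2 powr (-2 alpha) and n = card V. Since D = rdist u v <= 2h, moving the centre from
   u to v costs each weight at most a factor q, up to an error 1/n^2: by the triangle inequality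
   rdist v b <= D + rdist u b, and either this stays below the cut-off 2h log n / alpha, or
   rdist u b is so close to the cut-off that q w(u,b) <= 1/n^2. Summing over b, the overlap
   S = sum_b min (w(u,b)) (w(v,b)) is at least q W_u - 1/n, the term b = u alone gives S >= q,
   and W_v <= (W_u + 1/n) / q. The convex combination (1 - q^2) q + q^2 (q W_u - 1/n) of the two
   lower bounds is at least q^3 (W_u + 1/n); dividing S by (W_u + 1/n) / q >= max W_u W_v
   gives q^4 = 2 powr (-8 alpha). *)

lemma is_path_iff_successively:
  "is_path E xs u v \<longleftrightarrow> xs \<noteq> [] \<and> hd xs = u \<and> last xs = v \<and> successively (\<lambda>x y. (x, y) \<in> E) xs"
  unfolding is_path_def successively_conv_nth by blast

lemma path_len_singleton [simp]: "path_len len [x] = 0"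
  unfolding path_len_def by simp

lemma path_len_Cons_Cons [simp]: "path_len len (x # y # zs) = len (x, y) + path_len len (y # zs)"
  unfolding path_len_def by (simp add: sum.lessThan_Suc_shift del: sum.lessThan_Suc)

lemma path_len_append:
  "xs \<noteq> [] \<Longrightarrow> path_len len (xs @ ys) = path_len len xs + path_len len (last xs # ys)"
  by (induction xs rule: induct_list012) auto

lemma is_path_append:
  assumes "is_path E xs u v" and "is_path E (v # ys) v w"
  shows "is_path E (xs @ ys) u w"
  using assms by (auto simp: is_path_iff_successively successively_append_iff successively_Cons)

lemma gdist_le_path: "is_path E xs u v \<Longrightarrow> gdist E len u v \<le> enat (path_len len xs)"
  unfolding gdist_def by (rule INF_lower) simp

lemma gdist_attained:
  assumes "gdist E len u v \<noteq> \<infinity>"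
  obtains xs where "is_path E xs u v" and "gdist E len u v = enat (path_len len xs)"
proof -
  let ?S = "(\<lambda>xs. enat (path_len len xs)) ` {xs. is_path E xs u v}"
  have "?S \<noteq> {}"
    using assms unfolding gdist_def by (metis INF_empty top_enat_def image_empty)
  then have "Inf ?S \<in> ?S"
    unfolding Inf_enat_def by (auto intro: LeastI)
  then show ?thesis
    using that unfolding gdist_def by auto
qed

lemma gdist_refl: "gdist E len u u = 0"
  using gdist_le_path[of E "[u]" u u len] by (simp add: is_path_def flip: zero_enat_def)

lemma gdist_triangle: "gdist E len u w \<le> gdist E len u v + gdist E len v w"
proof (cases "gdist E len u v = \<infinity> \<or> gdist E len v w = \<infinity>")
  case False
  then obtain xs ys where xs: "is_path E xs u v" "gdist E len u v = enat (path_len len xs)"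
    and ys: "is_path E ys v w" "gdist E len v w = enat (path_len len ys)"
    by (metis gdist_attained)
  then obtain ys' where ys': "ys = v # ys'"
    unfolding is_path_def by (cases ys) auto
  have "gdist E len u w \<le> enat (path_len len (xs @ ys'))"
    using xs ys ys' by (intro gdist_le_path is_path_append) auto
  also have "\<dots> = gdist E len u v + gdist E len v w"
    using xs ys ys' by (auto simp: path_len_append is_path_def)
  finally show ?thesis .
qed auto

lemma rdist_sym: "rdist E len u v = rdist E len v u"
  unfolding rdist_def by (simp add: add.commute)

lemma rdist_refl: "rdist E len u u = 0"
  unfolding rdist_def by (simp add: gdist_refl)

lemma rdist_triangle: "rdist E len u w \<le> rdist E len u v + rdist E len v w"
proof -
  have "rdist E len u w \<le> (gdist E len u v + gdist E len v w) + (gdist E len w v + gdist E len v u)"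
    unfolding rdist_def by (intro add_mono gdist_triangle)
  also have "\<dots> = rdist E len u v + rdist E len v w"
    unfolding rdist_def by (simp add: ac_simps)
  finally show ?thesis .
qed

lemma wexp_nonneg: "0 \<le> wexp V E len h \<alpha> x b"
  unfolding wexp_def by auto

lemma wexp_self [simp]: "wexp V E len h \<alpha> x x = 1"
  unfolding wexp_def by simp

lemma wexp_rdist_infinite: "rdist E len x b = \<infinity> \<Longrightarrow> wexp V E len h \<alpha> x b = 0"
  unfolding wexp_def by (auto simp: rdist_refl)

lemma wexp_le_powr:
  assumes "rdist E len x b = enat d"
  shows "wexp V E len h \<alpha> x b \<le> 2 powr (- \<alpha> * d / h)"
  using assms unfolding wexp_def by (auto simp: rdist_refl zero_enat_def)

lemma wexp_eq_powr:
  assumes "rdist E len x b = enat d" and "d \<le> 2 * h * log 2 (real (card V)) / \<alpha>"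
  shows "wexp V E len h \<alpha> x b = 2 powr (- \<alpha> * d / h)"
  using assms unfolding wexp_def by (auto simp: rdist_refl zero_enat_def)

lemma powr_neg_scaled_antimono:
  fixes \<alpha> h s t :: real
  assumes "0 \<le> \<alpha>" "0 < h" "s \<le> t"
  shows "2 powr (- \<alpha> * t / h) \<le> 2 powr (- \<alpha> * s / h)"
  using assms by (simp add: divide_right_mono mult_left_mono)

lemma powr_rdist_le_wexp:
  assumes "0 < h" "0 < \<alpha>" "card V > 0" and "rdist E len y b = enat e"
  shows "2 powr (- \<alpha> * e / h) \<le> wexp V E len h \<alpha> y b + 1 / (real (card V))\<^sup>2"
proof (cases "e \<le> 2 * h * log 2 (real (card V)) / \<alpha>")
  case True
  then show ?thesis
    using assms(4) by (simp add: wexp_eq_powr)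
next
  case False
  define n where "n = real (card V)"
  have "2 powr (- \<alpha> * e / h) \<le> 2 powr (- \<alpha> * (2 * h * log 2 n / \<alpha>) / h)"
    using False assms(1,2) unfolding n_def by (intro powr_neg_scaled_antimono) auto
  also have "\<dots> = 1 / (2 powr log 2 n) powr 2"
    using assms(1,2) by (simp add: powr_minus_divide powr_powr mult.commute)
  also have "\<dots> = 1 / n\<^sup>2"
    using assms(3) unfolding n_def by simp
  finally show ?thesis
    using wexp_nonneg[of V E len h \<alpha> y b] unfolding n_def by linarith
qed

lemma wexp_shift:
  assumes "0 < h" "0 < \<alpha>" "card V > 0" and D: "rdist E len x y = enat D"
  shows "2 powr (- \<alpha> * D / h) * wexp V E len h \<alpha> x b \<le> wexp V E len h \<alpha> y b + 1 / (real (card V))\<^sup>2"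
proof (cases "rdist E len x b")
  case (enat d)
  have "rdist E len y b \<le> enat (D + d)"
    using rdist_triangle[of E len y b x] D enat by (simp add: rdist_sym)
  then obtain e where e: "rdist E len y b = enat e" "e \<le> D + d"
    by (metis enat_ile enat_ord_simps(1))
  have "2 powr (- \<alpha> * D / h) * wexp V E len h \<alpha> x b \<le> 2 powr (- \<alpha> * D / h) * 2 powr (- \<alpha> * d / h)"
    using enat by (intro mult_left_mono wexp_le_powr) auto
  also have "\<dots> = 2 powr (- \<alpha> * D / h + - \<alpha> * d / h)"
    by (rule powr_add[symmetric])
  also have "\<dots> = 2 powr (- \<alpha> * (real D + real d) / h)"
    by (simp only: distrib_left add_divide_distrib)
  also have "\<dots> \<le> 2 powr (- \<alpha> * e / h)"
    using assms(1,2) e(2) by (intro powr_neg_scaled_antimono) auto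
  also have "\<dots> \<le> wexp V E len h \<alpha> y b + 1 / (real (card V))\<^sup>2"
    using assms(1-3) e(1) by (rule powr_rdist_le_wexp)
  finally show ?thesis .
next
  case infinity
  then show ?thesis
    using wexp_nonneg[of V E len h \<alpha> y b] by (simp add: wexp_rdist_infinite)
qed

lemma wexp_shift_close:
  fixes h \<alpha> :: real and D :: nat
  assumes "0 < h" "1 \<le> \<alpha>" "card V > 0" and "rdist E len x y = enat D" "D \<le> 2 * h"
  shows "2 powr (- 2 * \<alpha>) * wexp V E len h \<alpha> x b \<le> wexp V E len h \<alpha> y b + 1 / (real (card V))\<^sup>2"
proof -
  have "2 powr (- 2 * \<alpha>) \<le> 2 powr (- \<alpha> * D / h)"
    using assms(1,2,5) by (simp add: field_simps)
  then have "2 powr (- 2 * \<alpha>) * wexp V E len h \<alpha> x b \<le> 2 powr (- \<alpha> * D / h) * wexp V E len h \<alpha> x b"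
    using wexp_nonneg by (rule mult_right_mono)
  also have "\<dots> \<le> wexp V E len h \<alpha> y b + 1 / (real (card V))\<^sup>2"
    using assms by (intro wexp_shift) auto
  finally show ?thesis .
qed

lemma wexp_close_ge:
  fixes h \<alpha> :: real and D :: nat
  assumes "0 < h" "1 \<le> \<alpha>" "\<alpha> \<le> log 2 (real (card V))"
    and "rdist E len x y = enat D" "D \<le> 2 * h"
  shows "2 powr (- 2 * \<alpha>) \<le> wexp V E len h \<alpha> x y"
proof -
  have "2 * h * 1 \<le> 2 * h * (log 2 (real (card V)) / \<alpha>)"
    using assms(1-3) by (intro mult_left_mono) auto
  then have "wexp V E len h \<alpha> x y = 2 powr (- \<alpha> * D / h)"
    using assms(4,5) by (intro wexp_eq_powr) auto
  then show ?thesis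
    using assms(1,2,5) by (simp add: field_simps)
qed

lemma sum_min_divide_le_sum_min_divide:
  fixes f g :: "'b \<Rightarrow> real"
  assumes "\<And>b. b \<in> A \<Longrightarrow> 0 \<le> f b" and "\<And>b. b \<in> A \<Longrightarrow> 0 \<le> g b"
    and "0 < F" "0 < G" "F \<le> M" "G \<le> M"
  shows "(\<Sum>b\<in>A. min (f b) (g b)) / M \<le> (\<Sum>b\<in>A. min (f b / F) (g b / G))"
  unfolding sum_divide_distrib
proof (rule sum_mono)
  fix b assume "b \<in> A"
  have "min (f b) (g b) / M \<le> f b / F" "min (f b) (g b) / M \<le> g b / G"
    using assms \<open>b \<in> A\<close> by (auto intro: frac_le)
  then show "min (f b) (g b) / M \<le> min (f b / F) (g b / G)"
    by simp
qed

lemma cube_mult_le_of_lower_bounds: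
  fixes q F \<delta> S :: real
  assumes q: "0 < q" "q \<le> 1/2" and \<delta>: "0 \<le> \<delta>" "\<delta> \<le> 1"
    and "q \<le> S" and "q * F - \<delta> \<le> S"
  shows "q ^ 3 * (F + \<delta>) \<le> S"
proof -
  have "q * \<delta> \<le> 1 - q"
    using q \<delta> mult_left_le[of \<delta> q] by linarith
  then have "q * (1 + q) * (q * \<delta>) \<le> q * (1 + q) * (1 - q)"
    using q by (intro mult_left_mono) auto
  then have "q ^ 3 * (F + \<delta>) \<le> (1 - q\<^sup>2) * q + q\<^sup>2 * (q * F - \<delta>)"
    by (simp add: algebra_simps power2_eq_square power3_eq_cube)
  also have "\<dots> \<le> (1 - q\<^sup>2) * S + q\<^sup>2 * S"
    using assms by (intro add_mono mult_left_mono) (auto simp: power_le_one)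
  finally show ?thesis
    by (simp add: algebra_simps)
qed

lemma sum_min_normalized_ge:
  fixes f g :: "'b \<Rightarrow> real" and q \<epsilon> :: real
  assumes "finite A" and "a \<in> A"
    and f_nonneg: "\<And>b. b \<in> A \<Longrightarrow> 0 \<le> f b" and g_nonneg: "\<And>b. b \<in> A \<Longrightarrow> 0 \<le> g b"
    and q: "0 < q" "q \<le> 1/2" and \<epsilon>: "0 \<le> \<epsilon>" "card A * \<epsilon> \<le> 1"
    and fg: "\<And>b. b \<in> A \<Longrightarrow> q * f b \<le> g b + \<epsilon>"
    and gf: "\<And>b. b \<in> A \<Longrightarrow> q * g b \<le> f b + \<epsilon>"
    and a: "q \<le> f a" "q \<le> g a"
  shows "q ^ 4 \<le> (\<Sum>b\<in>A. min (f b / sum f A) (g b / sum g A))"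
proof -
  define F G S \<delta> where "F = sum f A" and "G = sum g A"
    and "S = (\<Sum>b\<in>A. min (f b) (g b))" and "\<delta> = card A * \<epsilon>"
  have \<delta>: "0 \<le> \<delta>" "\<delta> \<le> 1"
    using \<epsilon> by (auto simp: \<delta>_def)
  have "min (f a) (g a) \<le> S"
    unfolding S_def using assms(1,2) f_nonneg g_nonneg by (intro member_le_sum) auto
  then have S_ge_q: "q \<le> S"
    using a by linarith
  have "q * f b - \<epsilon> \<le> min (f b) (g b)" if "b \<in> A" for b
    using fg[OF that] f_nonneg[OF that] q \<epsilon> mult_left_le_one_le[of "f b" q] by auto
  then have "(\<Sum>b\<in>A. q * f b - \<epsilon>) \<le> S"
    unfolding S_def by (rule sum_mono)
  then have S_ge_F: "q * F - \<delta> \<le> S"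
    by (simp add: F_def \<delta>_def sum_subtractf sum_distrib_left)
  have "(\<Sum>b\<in>A. q * g b) \<le> (\<Sum>b\<in>A. f b + \<epsilon>)"
    using gf by (rule sum_mono)
  then have G_le: "q * G \<le> F + \<delta>"
    by (simp add: F_def G_def \<delta>_def sum.distrib sum_distrib_left)
  have "f a \<le> F" "g a \<le> G"
    unfolding F_def G_def using assms(1,2) f_nonneg g_nonneg by (auto intro: member_le_sum)
  then have F_pos: "0 < F" and G_pos: "0 < G"
    using a q by linarith+
  define M where "M = (F + \<delta>) / q"
  have "q * F \<le> F"
    using q F_pos by (intro mult_left_le_one_le) auto
  then have "F \<le> M" "G \<le> M"
    using q \<delta> G_le by (auto simp: M_def field_simps)
  have "q * (q ^ 3 * (F + \<delta>)) \<le> q * S"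
    using cube_mult_le_of_lower_bounds[OF q \<delta> S_ge_q S_ge_F] q by (intro mult_left_mono) auto
  then have "q ^ 4 \<le> S / M"
    using F_pos \<delta> by (simp add: M_def pos_le_divide_eq power_numeral_reduce mult.assoc mult.commute[of S])
  also have "\<dots> \<le> (\<Sum>b\<in>A. min (f b / F) (g b / G))"
    unfolding S_def using f_nonneg g_nonneg F_pos G_pos \<open>F \<le> M\<close> \<open>G \<le> M\<close>
    by (rule sum_min_divide_le_sum_min_divide)
  finally show ?thesis
    unfolding F_def G_def .
qed

theorem lemma3p12:
  fixes V :: "'a set" and E :: "('a \<times> 'a) set" and len :: "'a \<times> 'a \<Rightarrow> nat"
    and h \<alpha> :: real and u v :: 'a
  assumes "finite V" and "E \<subseteq> V \<times> V" and "\<And>e. e \<in> E \<Longrightarrow> len e > 0"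
    and "h > 0" and "1 \<le> \<alpha>" and "\<alpha> \<le> log 2 (real (card V))"
    and "u \<in> V" and "v \<in> V"
    and "rdist E len u v \<noteq> \<infinity>" and "real (the_enat (rdist E len u v)) \<le> 2 * h"
  shows "(\<Sum>b\<in>V. min (mixing V E len h \<alpha> u b) (mixing V E len h \<alpha> v b)) \<ge> 2 powr (- 8 * \<alpha>)"
proof -
  let ?w = "wexp V E len h \<alpha>"
  define q where "q = (2::real) powr (- 2 * \<alpha>)"
  define \<epsilon> where "\<epsilon> = 1 / (real (card V))\<^sup>2"
  obtain D where uv: "rdist E len u v = enat D" and vu: "rdist E len v u = enat D" and "D \<le> 2 * h"
    using assms(9,10) rdist_sym[of E len u v] by auto
  have "card V > 0"
    using assms(1,7) card_gt_0_iff by blast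
  have "q \<le> 2 powr (- 2)"
    using assms(5) by (simp add: q_def)
  then have "q \<le> 1/2"
    by (simp add: powr_minus_divide)
  have "q ^ 4 \<le> (\<Sum>b\<in>V. min (?w u b / sum (?w u) V) (?w v b / sum (?w v) V))"
  proof (rule sum_min_normalized_ge[OF assms(1,7) wexp_nonneg wexp_nonneg])
    show "0 < q" "q \<le> 1/2" "q \<le> ?w u u"
      using \<open>q \<le> 1/2\<close> by (simp_all add: q_def)
    show "0 \<le> \<epsilon>" "card V * \<epsilon> \<le> 1"
      using \<open>card V > 0\<close> by (simp_all add: \<epsilon>_def power2_eq_square)
    show "q * ?w u b \<le> ?w v b + \<epsilon>" for b
      unfolding q_def \<epsilon>_def using assms(4,5) \<open>card V > 0\<close> uv \<open>D \<le> 2 * h\<close>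
      by (rule wexp_shift_close)
    show "q * ?w v b \<le> ?w u b + \<epsilon>" for b
      unfolding q_def \<epsilon>_def using assms(4,5) \<open>card V > 0\<close> vu \<open>D \<le> 2 * h\<close>
      by (rule wexp_shift_close)
    show "q \<le> ?w v u"
      unfolding q_def using assms(4-6) vu \<open>D \<le> 2 * h\<close> by (rule wexp_close_ge)
  qed
  moreover have "q ^ 4 = 2 powr (- 8 * \<alpha>)"
    by (simp add: q_def powr_power)
  ultimately show ?thesis
    by (simp add: mixing_def wtot_def)
qed

end
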